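(* Let $p$, $n$, $b_1,\dots,b_n$, $h$, $b$, $\mathfrak{b}$, $\mathfrak{a}$, $d$, $D$, $H$ be as in the context. For each $s\in\mathbb{S}_{p^n}$, the equation $u+\mathfrak{a}(t)=p^n-1+s$ gives a bijection from $\{t\in\mathbb{S}_{p^n}(h):\mathfrak{a}(t)\succeq s\}$ to $\{u\in\mathbb{S}_{p^n}:u\succeq s\}$, with inverse $t=H(u-s,b)$. Furthermore, if $u$ corresponds to $t$ under this bijection, then $H(s,t)=H(u,b)$ and $D(s,t)=d(u)-d(u-s)$.
   Context: Let $p$ be a prime, $n\ge1$, $\mathbb{S}_{p^n}=\{0,\dots,p^n-1\}$; write $s\in\mathbb{S}_{p^n}$ as $s=\sum_{i=1}^n s_{(n-i)}p^{n-i}$ with digits in $\{0,\dots,p-1\}$, and $s\preceq t$ means $s_{(n-i)}\le t_{(n-i)}$ for all $i$. Let $b_1,\dots,b_n$ be integers prime to $p$, $\mathfrak{b}(s)=\sum_i s_{(n-i)}p^{n-i}b_i$, and for $t\in\mathbb{Z}$ let $\mathfrak{a}(t)\in\mathbb{S}_{p^n}$ be the unique element with $\mathfrak{b}(\mathfrak{a}(t))\equiv-t\pmod{p^n}$. Let $r:\mathbb{Z}\to\mathbb{S}_{p^n}$ be reduction mod $p^n$. Fix $h\in\mathbb{Z}$, let $\mathbb{S}_{p^n}(h)=\{t\in\mathbb{Z}:h\le t<h+p^n\}$, and let $b\in\mathbb{S}_{p^n}(h)$ be the unique element with $\mathfrak{a}(b)=p^n-1$. For $s\in\mathbb{S}_{p^n}$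 and $t\in\mathbb{S}_{p^n}(h)$ define $D(s,t)=\lfloor(\mathfrak{b}(s)+t-h)/p^n\rfloor$, $H(s,t)=h+r(\mathfrak{b}(s)+t-h)$, and $d(s)=D(s,b)$. *)

theory Defs
  imports "HOL-Number_Theory.Cong"
begin

definition digit :: "nat \<Rightarrow> nat \<Rightarrow> int \<Rightarrow> int" where
  "digit p k s = (s div (int p) ^ k) mod int p"

definition preceq :: "nat \<Rightarrow> nat \<Rightarrow> int \<Rightarrow> int \<Rightarrow> bool" where
  "preceq p n s t \<longleftrightarrow> (\<forall>k<n. digit p k s \<le> digit p k t)"

definition frakb :: "nat \<Rightarrow> nat \<Rightarrow> (nat \<Rightarrow> int) \<Rightarrow> int \<Rightarrow> int" where
  "frakb p n bs s = (\<Sum>i=1..n. digit p (n - i) s * (int p) ^ (n - i) * bs i)"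

definition fraka :: "nat \<Rightarrow> nat \<Rightarrow> (nat \<Rightarrow> int) \<Rightarrow> int \<Rightarrow> int" where
  "fraka p n bs t = (THE a. 0 \<le> a \<and> a < (int p) ^ n \<and> [frakb p n bs a = - t] (mod (int p) ^ n))"

definition belt :: "nat \<Rightarrow> nat \<Rightarrow> (nat \<Rightarrow> int) \<Rightarrow> int \<Rightarrow> int" where
  "belt p n bs h = (THE t. h \<le> t \<and> t < h + (int p) ^ n \<and> fraka p n bs t = (int p) ^ n - 1)"

definition DD :: "nat \<Rightarrow> nat \<Rightarrow> (nat \<Rightarrow> int) \<Rightarrow> int \<Rightarrow> int \<Rightarrow> int \<Rightarrow> int" where
  "DD p n bs h s t = (frakb p n bs s + t - h) div (int p) ^ n"

definition HH :: "nat \<Rightarrow> nat \<Rightarrow> (nat \<Rightarrow> int) \<Rightarrow> int \<Rightarrow> int \<Rightarrow> int \<Rightarrow> int" where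
  "HH p n bs h s t = h + (frakb p n bs s + t - h) mod (int p) ^ n"

definition dd :: "nat \<Rightarrow> nat \<Rightarrow> (nat \<Rightarrow> int) \<Rightarrow> int \<Rightarrow> int \<Rightarrow> int" where
  "dd p n bs h s = DD p n bs h s (belt p n bs h)"

end

theory Submission
  imports Defs
begin

text \<open>Write \<open>a = \<aa>(t)\<close> and \<open>u = p^n - 1 + s - a\<close>. When \<open>s \<preceq> a\<close>, the digits of \<open>u\<close> are
  \<open>p - 1 - a\<^sub>k + s\<^sub>k\<close>, so \<open>s \<preceq> u\<close>, and both \<open>u - s = (p^n - 1) - a\<close> and \<open>u - s\<close> itself are
  digitwise differences without borrow. \<open>\<bb>\<close> is additive on such differences, whence
  \<open>\<bb>(u - s) + b \<equiv> \<bb>(p^n - 1) + b - \<bb>(a) \<equiv> t (mod p^n)\<close>, because \<open>\<aa>(b) = p^n - 1\<close> and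
  \<open>\<aa>(t) = a\<close>. So \<open>H(u - s, b) = t\<close>, and \<open>\<bb>(u) = \<bb>(s) + \<bb>(u - s)\<close> shows that \<open>\<bb>(u) + b - h\<close>
  and \<open>\<bb>(s) + t - h\<close> differ by exactly \<open>d(u - s) p^n\<close>, which gives the relations for \<open>H\<close> and
  \<open>D\<close>. That \<open>\<aa>\<close> and \<open>b\<close> are well defined is the injectivity of \<open>\<bb>\<close> modulo \<open>p^n\<close>, seen digit
  by digit since the \<open>b\<^sub>i\<close> are prime to \<open>p\<close>.\<close>

lemma digit_nonneg: "p > 0 \<Longrightarrow> 0 \<le> digit p k x"
  unfolding digit_def by simp

lemma digit_less: "p > 0 \<Longrightarrow> digit p k x < int p"
  unfolding digit_def by simp

lemma digit_0: "digit p 0 x = x mod int p"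
  unfolding digit_def by simp

lemma digit_Suc: "digit p (Suc k) x = digit p k (x div int p)"
  unfolding digit_def by (simp add: zdiv_zmult2_eq)

lemma div_less_power:
  assumes "int p > 0" "x < int p ^ Suc m"
  shows "x div int p < int p ^ m"
proof -
  have "x div int p * int p = x - x mod int p" by (simp add: minus_mod_eq_div_mult)
  moreover have "0 \<le> x mod int p" using assms(1) by simp
  moreover have "x < int p ^ m * int p" using assms(2) by (simp add: mult.commute)
  ultimately have "x div int p * int p < int p ^ m * int p" by linarith
  then show ?thesis using assms(1) by simp
qed

lemma digits_of_digit_sum:
  assumes "p > 0" "\<forall>k<m. 0 \<le> e k \<and> e k < int p"
  shows "0 \<le> (\<Sum>k<m. e k * int p ^ k) \<and> (\<Sum>k<m. e k * int p ^ k) < int p ^ m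
    \<and> (\<forall>j<m. digit p j (\<Sum>k<m. e k * int p ^ k) = e j)"
  using assms(2)
proof (induction m arbitrary: e)
  case 0 then show ?case by simp
next
  case (Suc m)
  define r where "r = (\<Sum>k<m. e (Suc k) * int p ^ k)"
  have IH: "0 \<le> r \<and> r < int p ^ m \<and> (\<forall>j<m. digit p j r = e (Suc j))"
    unfolding r_def using Suc.IH[of "\<lambda>k. e (Suc k)"] Suc.prems by auto
  have sum: "(\<Sum>k<Suc m. e k * int p ^ k) = e 0 + int p * r"
    unfolding r_def
    by (simp add: sum.lessThan_Suc_shift sum_distrib_left algebra_simps del: sum.lessThan_Suc)
  have e0: "0 \<le> e 0" "e 0 < int p" using Suc.prems by auto
  have "int p * r \<le> int p * (int p ^ m - 1)" using IH assms(1) by (intro mult_left_mono) auto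
  then have range: "0 \<le> e 0 + int p * r \<and> e 0 + int p * r < int p ^ Suc m"
    using IH e0 by (simp add: algebra_simps)
  have "digit p j (e 0 + int p * r) = e j" if "j < Suc m" for j
    using that e0 assms(1) IH by (cases j) (auto simp: digit_0 digit_Suc)
  then show ?case unfolding sum using range by simp
qed

lemma digit_expansion:
  assumes "p > 0" "0 \<le> x" "x < int p ^ m"
  shows "x = (\<Sum>k<m. digit p k x * int p ^ k)"
  using assms(2,3)
proof (induction m arbitrary: x)
  case 0 then show ?case by simp
next
  case (Suc m)
  have "x div int p = (\<Sum>k<m. digit p k (x div int p) * int p ^ k)"
    using Suc.IH[of "x div int p"] Suc.prems assms(1)
    by (simp add: pos_imp_zdiv_nonneg_iff div_less_power)
  then have "x = x mod int p + int p * (\<Sum>k<m. digit p k (x div int p) * int p ^ k)"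
    by simp
  also have "\<dots> = (\<Sum>k<Suc m. digit p k x * int p ^ k)"
    by (simp add: sum.lessThan_Suc_shift sum_distrib_left algebra_simps digit_0 digit_Suc
        del: sum.lessThan_Suc)
  finally show ?case .
qed

lemma digit_pred_power:
  assumes "p > 0" "k < n"
  shows "digit p k (int p ^ n - 1) = int p - 1"
proof -
  have "int p ^ n - 1 = (\<Sum>k<n. (int p - 1) * int p ^ k)"
    by (simp add: power_diff_1_eq sum_distrib_left)
  then show ?thesis using digits_of_digit_sum[of p n "\<lambda>_. int p - 1"] assms by simp
qed

lemma preceq_pred_power:
  assumes "p > 0"
  shows "preceq p n a (int p ^ n - 1)"
  using assms by (simp add: preceq_def digit_pred_power digit_less)

lemma digits_diff_preceq:
  assumes "p > 0" "0 \<le> s" "s < int p ^ n" "0 \<le> u" "u < int p ^ n" "preceq p n s u"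
  shows "0 \<le> u - s \<and> u - s < int p ^ n \<and> (\<forall>k<n. digit p k (u - s) = digit p k u - digit p k s)"
proof -
  have "(\<Sum>k<n. (digit p k u - digit p k s) * int p ^ k)
      = (\<Sum>k<n. digit p k u * int p ^ k) - (\<Sum>k<n. digit p k s * int p ^ k)"
    by (simp add: sum_subtractf left_diff_distrib)
  also have "\<dots> = u - s"
    by (simp only: digit_expansion[OF assms(1,4,5), symmetric] digit_expansion[OF assms(1-3), symmetric])
  finally have "u - s = (\<Sum>k<n. (digit p k u - digit p k s) * int p ^ k)" ..
  moreover have "\<forall>k<n. 0 \<le> digit p k u - digit p k s \<and> digit p k u - digit p k s < int p"
    using assms(6) digit_nonneg[OF assms(1)] digit_less[OF assms(1)]
    unfolding preceq_def by (smt (verit))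
  ultimately show ?thesis using digits_of_digit_sum[OF assms(1)] by simp
qed

lemma complement_preceq:
  assumes "p > 0" "0 \<le> s" "s < int p ^ n" "0 \<le> a" "a < int p ^ n" "preceq p n s a"
  shows "0 \<le> int p ^ n - 1 + s - a \<and> int p ^ n - 1 + s - a < int p ^ n
    \<and> preceq p n s (int p ^ n - 1 + s - a)"
proof -
  define e where "e k = int p - 1 - digit p k a + digit p k s" for k
  have "int p ^ n - 1 + s - a = (\<Sum>k<n. e k * int p ^ k)"
  proof -
    have "int p ^ n - 1 = (\<Sum>k<n. (int p - 1) * int p ^ k)"
      by (simp add: power_diff_1_eq sum_distrib_left)
    then show ?thesis
      using digit_expansion[OF assms(1,2,3)] digit_expansion[OF assms(1,4,5)]
      by (simp add: e_def algebra_simps sum.distrib sum_subtractf)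
  qed
  moreover have "\<forall>k<n. 0 \<le> e k \<and> e k < int p \<and> digit p k s \<le> e k"
    using assms(6) digit_nonneg[OF assms(1)] digit_less[OF assms(1)]
    unfolding preceq_def e_def by (smt (verit))
  ultimately show ?thesis
    using digits_of_digit_sum[of p n e] assms(1) by (simp add: preceq_def)
qed

definition weighted_digit_sum :: "nat \<Rightarrow> nat \<Rightarrow> (nat \<Rightarrow> int) \<Rightarrow> int \<Rightarrow> int" where
  "weighted_digit_sum p m c x = (\<Sum>k<m. digit p k x * int p ^ k * c k)"

lemma weighted_digit_sum_Suc:
  "weighted_digit_sum p (Suc m) c x
     = x mod int p * c 0 + int p * weighted_digit_sum p m (\<lambda>k. c (Suc k)) (x div int p)"
  unfolding weighted_digit_sum_def
  by (simp add: sum.lessThan_Suc_shift sum_distrib_left algebra_simps digit_0 digit_Suc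
      del: sum.lessThan_Suc)

lemma weighted_digit_sum_cong_imp_eq:
  assumes "prime p" and "\<forall>k<m. coprime (c k) (int p)"
    and "0 \<le> x" "x < int p ^ m" "0 \<le> y" "y < int p ^ m"
    and "[weighted_digit_sum p m c x = weighted_digit_sum p m c y] (mod int p ^ m)"
  shows "x = y"
  using assms(2-)
proof (induction m arbitrary: c x y)
  case 0 then show ?case by simp
next
  case (Suc m)
  have p0: "int p > 0" using assms(1) prime_gt_0_nat by auto
  define W where "W z = weighted_digit_sum p m (\<lambda>k. c (Suc k)) (z div int p)" for z
  have cong: "[x mod int p * c 0 + int p * W x = y mod int p * c 0 + int p * W y]
      (mod int p * int p ^ m)"
    using Suc.prems(6) by (simp add: weighted_digit_sum_Suc W_def)
  then have "[x mod int p * c 0 + int p * W x = y mod int p * c 0 + int p * W y] (mod int p)"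
    by (rule cong_modulus_mult)
  then have "[x mod int p * c 0 = y mod int p * c 0] (mod int p)"
    by (simp add: cong_def)
  then have "[x mod int p = y mod int p] (mod int p)"
    using Suc.prems(1) by (simp add: cong_mult_rcancel)
  then have low: "x mod int p = y mod int p"
    by (simp add: cong_def)
  then have "[int p * W x = int p * W y] (mod int p * int p ^ m)"
    using cong by (simp add: cong_add_lcancel)
  then have "[W x = W y] (mod int p ^ m)"
    using p0 by (simp add: cong_iff_dvd_diff flip: right_diff_distrib)
  then have high: "x div int p = y div int p"
    using Suc.IH[of "\<lambda>k. c (Suc k)" "x div int p" "y div int p"] Suc.prems p0
    unfolding W_def by (simp add: pos_imp_zdiv_nonneg_iff div_less_power)
  show ?case using low high by (metis div_mult_mod_eq)
qed

lemma frakb_eq_weighted_digit_sum: "frakb p n bs x = weighted_digit_sum p n (\<lambda>k. bs (n - k)) x"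
  unfolding frakb_def weighted_digit_sum_def
  by (rule sum.reindex_bij_witness[of _ "\<lambda>k. n - k" "\<lambda>i. n - i"]) auto

lemma frakb_diff_preceq:
  assumes "p > 0" "0 \<le> s" "s < int p ^ n" "0 \<le> u" "u < int p ^ n" "preceq p n s u"
  shows "frakb p n bs (u - s) = frakb p n bs u - frakb p n bs s"
proof -
  have "\<forall>k<n. digit p k (u - s) = digit p k u - digit p k s"
    using digits_diff_preceq[OF assms] by blast
  then show ?thesis
    unfolding frakb_eq_weighted_digit_sum weighted_digit_sum_def
    by (simp add: left_diff_distrib sum_subtractf)
qed

lemma frakb_cong_imp_eq:
  assumes "prime p" "\<forall>i\<in>{1..n}. coprime (bs i) (int p)"
    and "0 \<le> x" "x < int p ^ n" "0 \<le> y" "y < int p ^ n"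
    and "[frakb p n bs x = frakb p n bs y] (mod int p ^ n)"
  shows "x = y"
proof (rule weighted_digit_sum_cong_imp_eq[OF assms(1) _ assms(3-6)])
  show "\<forall>k<n. coprime (bs (n - k)) (int p)" using assms(2) by auto
  show "[weighted_digit_sum p n (\<lambda>k. bs (n - k)) x = weighted_digit_sum p n (\<lambda>k. bs (n - k)) y]
      (mod int p ^ n)"
    using assms(7) by (simp add: frakb_eq_weighted_digit_sum)
qed

lemma ex1_frakb_cong:
  assumes "prime p" "\<forall>i\<in>{1..n}. coprime (bs i) (int p)"
  shows "\<exists>!a. 0 \<le> a \<and> a < int p ^ n \<and> [frakb p n bs a = - t] (mod int p ^ n)"
proof -
  let ?P = "int p ^ n"
  have P0: "?P > 0" using assms(1) prime_gt_0_nat by simp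
  define g where "g a = frakb p n bs a mod ?P" for a
  have inj: "inj_on g {0..<?P}"
    by (rule inj_onI) (auto simp: g_def cong_def intro: frakb_cong_imp_eq[OF assms])
  have "g ` {0..<?P} \<subseteq> {0..<?P}" using P0 by (auto simp: g_def)
  then have "g ` {0..<?P} = {0..<?P}" using inj by (simp add: endo_inj_surj)
  moreover have "(- t) mod ?P \<in> {0..<?P}" using P0 by simp
  ultimately obtain a where "a \<in> {0..<?P}" "g a = (- t) mod ?P"
    by (metis imageE)
  then have a: "0 \<le> a" "a < ?P" "[frakb p n bs a = - t] (mod ?P)"
    by (auto simp: g_def cong_def)
  show ?thesis
  proof (rule ex1I[of _ a])
    fix a' assume "0 \<le> a' \<and> a' < ?P \<and> [frakb p n bs a' = - t] (mod ?P)"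
    then show "a' = a" using a frakb_cong_imp_eq[OF assms]
      by (meson cong_sym cong_trans)
  qed (use a in blast)
qed

lemma fraka_spec:
  assumes "prime p" "\<forall>i\<in>{1..n}. coprime (bs i) (int p)"
  shows "0 \<le> fraka p n bs t \<and> fraka p n bs t < int p ^ n
    \<and> [frakb p n bs (fraka p n bs t) = - t] (mod int p ^ n)"
  unfolding fraka_def using theI'[OF ex1_frakb_cong[OF assms]] .

lemma fraka_eqI:
  assumes "prime p" "\<forall>i\<in>{1..n}. coprime (bs i) (int p)"
    and "0 \<le> a" "a < int p ^ n" "[frakb p n bs a = - t] (mod int p ^ n)"
  shows "fraka p n bs t = a"
  unfolding fraka_def using the1_equality[OF ex1_frakb_cong[OF assms(1,2)]] assms(3-) by blast

lemma belt_spec: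
  assumes "prime p" "\<forall>i\<in>{1..n}. coprime (bs i) (int p)"
  shows "fraka p n bs (belt p n bs h) = int p ^ n - 1"
proof -
  let ?P = "int p ^ n"
  have P0: "?P > 0" using assms(1) prime_gt_0_nat by simp
  define t0 where "t0 = h + (- frakb p n bs (?P - 1) - h) mod ?P"
  have t0: "h \<le> t0" "t0 < h + ?P" unfolding t0_def using P0 by simp_all
  have "[t0 = - frakb p n bs (?P - 1)] (mod ?P)"
    unfolding t0_def cong_def by (simp add: mod_add_right_eq)
  then have "[frakb p n bs (?P - 1) = - t0] (mod ?P)"
    by (metis cong_minus_minus_iff cong_sym minus_minus)
  then have f0: "fraka p n bs t0 = ?P - 1"
    using fraka_eqI[OF assms] P0 by simp
  have "\<exists>!t. h \<le> t \<and> t < h + ?P \<and> fraka p n bs t = ?P - 1"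
  proof (rule ex1I[of _ t0])
    fix t assume t: "h \<le> t \<and> t < h + ?P \<and> fraka p n bs t = ?P - 1"
    then have "[- t = - t0] (mod ?P)"
      using fraka_spec[OF assms, of t] fraka_spec[OF assms, of t0] f0
      by (metis cong_sym cong_trans)
    then have "[t - h = t0 - h] (mod ?P)" by (simp add: cong_diff cong_minus_minus_iff)
    then show "t = t0" using t t0 cong_less_imp_eq_int[of "t - h" ?P "t0 - h"] by simp
  qed (use t0 f0 in blast)
  then show ?thesis unfolding belt_def by (rule theI'[THEN conjunct2, THEN conjunct2])
qed

lemma HH_window:
  assumes "p > 0"
  shows "h \<le> HH p n bs h x t \<and> HH p n bs h x t < h + int p ^ n"
  using assms by (simp add: HH_def)

lemma HH_cong: "[HH p n bs h x t = frakb p n bs x + t] (mod int p ^ n)"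
  unfolding HH_def cong_def by (simp add: mod_add_right_eq)

lemma frakb_complement_cong:
  assumes "prime p" "\<forall>i\<in>{1..n}. coprime (bs i) (int p)" "0 \<le> a" "a < int p ^ n"
  shows "[frakb p n bs (int p ^ n - 1 - a) + belt p n bs h = - frakb p n bs a] (mod int p ^ n)"
proof -
  have p0: "p > 0" using assms(1) prime_gt_0_nat by blast
  have diff: "frakb p n bs (int p ^ n - 1 - a) = frakb p n bs (int p ^ n - 1) - frakb p n bs a"
    using frakb_diff_preceq[OF p0 assms(3,4) _ _ preceq_pred_power[OF p0]] p0 by simp
  have "[frakb p n bs (int p ^ n - 1) + belt p n bs h = 0] (mod int p ^ n)"
    using fraka_spec[OF assms(1,2), of "belt p n bs h"] belt_spec[OF assms(1,2)]
    by (simp add: cong_iff_dvd_diff)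
  then have "[frakb p n bs (int p ^ n - 1) - frakb p n bs a + belt p n bs h = - frakb p n bs a]
      (mod int p ^ n)"
    by (simp add: cong_iff_dvd_diff algebra_simps)
  then show ?thesis unfolding diff .
qed

lemma fraka_HH_complement:
  assumes "prime p" "\<forall>i\<in>{1..n}. coprime (bs i) (int p)"
    and "0 \<le> s" "s < int p ^ n" "0 \<le> u" "u < int p ^ n" "preceq p n s u"
  shows "fraka p n bs (HH p n bs h (u - s) (belt p n bs h)) = int p ^ n - 1 + s - u"
proof (rule fraka_eqI[OF assms(1,2)])
  have p0: "p > 0" using assms(1) prime_gt_0_nat by blast
  define a where "a = int p ^ n - 1 + s - u"
  show a: "0 \<le> a" "a < int p ^ n"
    using complement_preceq[OF p0 assms(3-7)] unfolding a_def by auto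
  have "u - s = int p ^ n - 1 - a" unfolding a_def by simp
  then have "[HH p n bs h (u - s) (belt p n bs h) = - frakb p n bs a] (mod int p ^ n)"
    using HH_cong frakb_complement_cong[OF assms(1,2) a] by (metis cong_trans)
  then show "[frakb p n bs a = - HH p n bs h (u - s) (belt p n bs h)] (mod int p ^ n)"
    by (metis cong_minus_minus_iff cong_sym minus_minus)
qed

lemma HH_DD_complement:
  assumes "prime p" "\<forall>i\<in>{1..n}. coprime (bs i) (int p)"
    and "0 \<le> s" "s < int p ^ n" "h \<le> t" "t < h + int p ^ n" "preceq p n s (fraka p n bs t)"
    and u: "u = int p ^ n - 1 + s - fraka p n bs t"
  shows "HH p n bs h (u - s) (belt p n bs h) = t
    \<and> HH p n bs h s t = HH p n bs h u (belt p n bs h)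
    \<and> DD p n bs h s t = dd p n bs h u - dd p n bs h (u - s)"
proof -
  have p0: "p > 0" using assms(1) prime_gt_0_nat by blast
  let ?P = "int p ^ n" and ?b = "belt p n bs h" and ?B = "frakb p n bs"
  define a where "a = fraka p n bs t"
  have a: "0 \<le> a" "a < ?P" "[?B a = - t] (mod ?P)"
    using fraka_spec[OF assms(1,2)] unfolding a_def by auto
  have u_range: "0 \<le> u" "u < ?P" "preceq p n s u"
    using complement_preceq[OF p0 assms(3,4) a(1,2)] assms(7) unfolding u a_def by auto
  have "u - s = ?P - 1 - a" unfolding u a_def by simp
  then have "[?B (u - s) + ?b = - ?B a] (mod ?P)"
    using frakb_complement_cong[OF assms(1,2) a(1,2)] by simp
  moreover have "[- ?B a = t] (mod ?P)"
    using a(3) by (metis cong_minus_minus_iff cong_sym minus_minus)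
  ultimately have "[?B (u - s) + ?b - h = t - h] (mod ?P)"
    by (metis cong_diff cong_refl cong_trans)
  then have rem: "(?B (u - s) + ?b - h) mod ?P = t - h"
    using assms(5,6) by (simp add: cong_def)
  define k where "k = dd p n bs h (u - s)"
  have split: "?B (u - s) + ?b - h = (t - h) + k * ?P"
    unfolding k_def dd_def DD_def using rem div_mult_mod_eq[of "?B (u - s) + ?b - h" ?P]
    by linarith
  have "?B u = ?B s + ?B (u - s)"
    using frakb_diff_preceq[OF p0 assms(3,4) u_range] by simp
  then have shift: "?B u + ?b - h = (?B s + t - h) + k * ?P"
    using split by simp
  have "HH p n bs h (u - s) ?b = t"
    using rem by (simp add: HH_def)
  moreover have "HH p n bs h u ?b = HH p n bs h s t"
    unfolding HH_def shift by simp
  moreover have "dd p n bs h u = DD p n bs h s t + k"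
    unfolding dd_def DD_def shift using p0 by simp
  ultimately show ?thesis using k_def by simp
qed

theorem lemma3p8:
  fixes p n :: nat and bs :: "nat \<Rightarrow> int" and h s :: int
  assumes "prime p" and "n \<ge> 1"
    and "\<forall>i\<in>{1..n}. coprime (bs i) (int p)"
    and "0 \<le> s" and "s < (int p) ^ n"
  shows "bij_betw (\<lambda>t. (int p) ^ n - 1 + s - fraka p n bs t)
           {t. h \<le> t \<and> t < h + (int p) ^ n \<and> preceq p n s (fraka p n bs t)}
           {u. 0 \<le> u \<and> u < (int p) ^ n \<and> preceq p n s u}
       \<and> (\<forall>u. 0 \<le> u \<and> u < (int p) ^ n \<and> preceq p n s u \<longrightarrow>
             (let t = HH p n bs h (u - s) (belt p n bs h) in
               h \<le> t \<and> t < h + (int p) ^ n \<and> preceq p n s (fraka p n bs t)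
               \<and> u + fraka p n bs t = (int p) ^ n - 1 + s))
       \<and> (\<forall>t u. h \<le> t \<and> t < h + (int p) ^ n \<and> preceq p n s (fraka p n bs t)
             \<and> u = (int p) ^ n - 1 + s - fraka p n bs t \<longrightarrow>
             HH p n bs h s t = HH p n bs h u (belt p n bs h)
             \<and> DD p n bs h s t = dd p n bs h u - dd p n bs h (u - s))"
  (is "bij_betw ?f ?T ?U \<and> ?backward \<and> ?forward")
proof -
  have p0: "p > 0" using assms(1) prime_gt_0_nat by blast
  let ?g = "\<lambda>u. HH p n bs h (u - s) (belt p n bs h)"
  have backward: "h \<le> ?g u \<and> ?g u < h + int p ^ n \<and> preceq p n s (fraka p n bs (?g u))
      \<and> ?f (?g u) = u \<and> u + fraka p n bs (?g u) = int p ^ n - 1 + s" if "u \<in> ?U" for u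
    using that HH_window[OF p0] fraka_HH_complement[OF assms(1,3-5)]
      complement_preceq[OF p0 assms(4,5)] by auto
  have forward: "?g (?f t) = t" if "t \<in> ?T" for t
    using that HH_DD_complement[OF assms(1,3-5)] by auto
  have "?f ` ?T \<subseteq> ?U"
    using fraka_spec[OF assms(1,3)] complement_preceq[OF p0 assms(4,5)] by auto
  then have "bij_betw ?f ?T ?U"
    using backward forward by (intro bij_betw_byWitness[where f' = ?g]) auto
  moreover have ?backward
    using backward by (auto simp: Let_def)
  moreover have ?forward
    using HH_DD_complement[OF assms(1,3-5)] by blast
  ultimately show ?thesis by blast
qed

end
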